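(* Let $n\ge 2$ and let $\dot{\mathbf x}=\mathbf f(\sigma,\mathbf x)$ be a multistable regulatory system (MSRS) as defined in the context, with $f_k(\sigma,\mathbf x)=-l(x_k)+\sigma\frac{g(x_k)}{P(x_1,\dots,x_n)+h(x_k)}$; fix $\sigma>0$ and let $\mathbf r\in\mathbb R_{>0}^n$ be an equilibrium. For $k=1,\dots,n$ let $D_k(\mathbf x)=-\frac{P(\mathbf x)+h(x_k)}{l(x_k)}$. (1) If $\mathbf r=(q,\dots,q)$ is diagonal, set $\tau=\frac{\partial f_n}{\partial x_n}(\mathbf r)$, $\xi=\frac{\partial P}{\partial x_{n-1}}(\mathbf r)/D_n(\mathbf r)$, $G_1=\tau-\xi$, $G_2=\tau+(n-1)\xi$. Then $\mathbf r$ is stable if and only if $G_1<0$ and $G_2<0$. (2),(3) Otherwise, suppose the coordinates of $\mathbf r$ take the value $p$ exactly $i$ times and the value $q\neq p$ exactly $n-i$ times with $1\le i\le\lfloor n/2\rfloor$. Let $\boldsymbol\rho=(p,\dots,p,q,\dots,q)$ ($p$ in the first $i$ coordinates), and set $\beta=\frac{\partial f_1}{\partial x_1}(\boldsymbol\rho)$, $\tau=\frac{\partial f_n}{\partial x_n}(\boldsymbol\rho)$, $\gamma=\frac{\partial P}{\partial x_2}(\boldsymbol\rho)/D_1(\boldsymbol\rho)$, $\xi=\frac{\partial P}{\partial x_{n-1}}(\boldsymbol\rho)/D_n(\boldsymbol\rho)$, $\mu=\frac{\partial P}{\partial x_n}(\boldsymbol\rho)/D_1(\boldsymbol\rho)$,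 $\nu=\frac{\partial P}{\partial x_1}(\boldsymbol\rho)/D_n(\boldsymbol\rho)$, $G_1=\tau-\xi$, $G_2=\beta-\gamma$, $G_3=\beta+\tau+(i-1)\gamma+(n-i-1)\xi$, $G_4=(\beta+(i-1)\gamma)(\tau+(n-i-1)\xi)-i(n-i)\mu\nu$. Then: (2a) if $i=1$ and $n=2$, $\mathbf r$ is stable if and only if $G_3<0$ and $G_4>0$; (2b) if $i=1$ and $n>2$, $\mathbf r$ is stable if and only if $G_1<0$, $G_3<0$ and $G_4>0$; (3) if $2\le i\le\lfloor n/2\rfloor$, $\mathbf r$ is stable if and only if $G_1<0$, $G_2<0$, $G_3<0$ and $G_4>0$.
   Context: A system of ODEs $\frac{dx_k}{dt}=f_k(\sigma,x_1,\dots,x_n)$, $k=1,\dots,n$, is called a multistable regulatory system (MSRS) if $f_k(\sigma,x_1,\dots,x_n)=-l(x_k)+\sigma\frac{g(x_k)}{P(x_1,\dots,x_n)+h(x_k)}$, where $l,g,h$ are real functions of one real variable and $P$ is a real function of $n$ real variables (all differentiable), and: (1) $\sigma$ is a positive parameter; (2) $P$ is symmetric, i.e. unchanged under interchanging any two of its arguments; (3) for every $k$ and every $(x_1,\dots,x_n)\in\mathbb R_{>0}^n$, $P(x_1,\dots,x_n)+h(x_k)>0$; (4) $l(z)\neq 0$ and for every $\sigma>0$ the function $z\mapsto \sigma\frac{g(z)}{l(z)}-h(z)$ has at most one extreme point for $z\in\mathbb R_{>0}$. For a given $\sigma$, a point $\mathbf r\in\mathbb R_{>0}^n$ is an equilibrium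 if $f_1(\sigma,\mathbf r)=\dots=f_n(\sigma,\mathbf r)=0$. An equilibrium $\mathbf r$ is stable (locally asymptotically stable) if all eigenvalues of the Jacobian matrix $J_{\mathbf f}(\mathbf r)=\left[\frac{\partial f_i}{\partial x_j}(\mathbf r)\right]_{i,j=1}^n$ have strictly negative real parts. An equilibrium is diagonal if all its coordinates are equal. *)

theory Defs
  imports "HOL-Analysis.Analysis" "Jordan_Normal_Form.Char_Poly"
begin

(* Points of R^n are encoded as functions nat => real; only the coordinates
   0,...,n-1 matter (coordinate k here is x_{k+1} of the paper). *)

definition pos_pt :: "nat \<Rightarrow> (nat \<Rightarrow> real) \<Rightarrow> bool" where
  "pos_pt n x \<longleftrightarrow> (\<forall>k<n. x k > 0)"

definition partial :: "((nat \<Rightarrow> real) \<Rightarrow> real) \<Rightarrow> nat \<Rightarrow> (nat \<Rightarrow> real) \<Rightarrow> real" where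
  "partial F j x = deriv (\<lambda>t. F (x(j := t))) (x j)"

definition differentiable_n :: "nat \<Rightarrow> ((nat \<Rightarrow> real) \<Rightarrow> real) \<Rightarrow> (nat \<Rightarrow> real) \<Rightarrow> bool" where
  "differentiable_n n F x \<longleftrightarrow> (\<exists>c::nat \<Rightarrow> real. \<forall>e>0. \<exists>d>0. \<forall>y.
      (\<forall>k<n. \<bar>y k - x k\<bar> < d) \<and> (\<forall>k. n \<le> k \<longrightarrow> y k = x k) \<longrightarrow>
      \<bar>F y - F x - (\<Sum>k<n. c k * (y k - x k))\<bar> \<le> e * (\<Sum>k<n. \<bar>y k - x k\<bar>))"

definition extreme_point_pos :: "(real \<Rightarrow> real) \<Rightarrow> real \<Rightarrow> bool" where
  "extreme_point_pos F z \<longleftrightarrow> z > 0 \<and> (\<exists>d>0.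
      (\<forall>y. y > 0 \<and> \<bar>y - z\<bar> < d \<longrightarrow> F y \<le> F z) \<or>
      (\<forall>y. y > 0 \<and> \<bar>y - z\<bar> < d \<longrightarrow> F z \<le> F y))"

definition msrs_f :: "(real \<Rightarrow> real) \<Rightarrow> (real \<Rightarrow> real) \<Rightarrow> (real \<Rightarrow> real) \<Rightarrow>
    ((nat \<Rightarrow> real) \<Rightarrow> real) \<Rightarrow> real \<Rightarrow> nat \<Rightarrow> (nat \<Rightarrow> real) \<Rightarrow> real" where
  "msrs_f l g h P \<sigma> k x = - l (x k) + \<sigma> * g (x k) / (P x + h (x k))"

definition MSRS :: "nat \<Rightarrow> (real \<Rightarrow> real) \<Rightarrow> (real \<Rightarrow> real) \<Rightarrow> (real \<Rightarrow> real) \<Rightarrow>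
    ((nat \<Rightarrow> real) \<Rightarrow> real) \<Rightarrow> bool" where
  "MSRS n l g h P \<longleftrightarrow>
     \<comment> \<open>P is a function of the n variables x_0..x_{n-1}\<close>
     (\<forall>x y. (\<forall>k<n. x k = y k) \<longrightarrow> P x = P y) \<and>
     \<comment> \<open>differentiability\<close>
     (\<forall>z>0. l differentiable (at z) \<and> g differentiable (at z) \<and> h differentiable (at z)) \<and>
     (\<forall>x. pos_pt n x \<longrightarrow> differentiable_n n P x) \<and>
     \<comment> \<open>(2) symmetry\<close>
     (\<forall>x a b. a < n \<and> b < n \<longrightarrow> P (x \<circ> Transposition.transpose a b) = P x) \<and>
     \<comment> \<open>(3)\<close>
     (\<forall>x k. pos_pt n x \<and> k < n \<longrightarrow> P x + h (x k) > 0) \<and>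
     \<comment> \<open>(4)\<close>
     (\<forall>z>0. l z \<noteq> 0) \<and>
     (\<forall>\<sigma>>0. \<forall>z1 z2. extreme_point_pos (\<lambda>z. \<sigma> * g z / l z - h z) z1 \<and>
                    extreme_point_pos (\<lambda>z. \<sigma> * g z / l z - h z) z2 \<longrightarrow> z1 = z2)"

definition equilibrium :: "nat \<Rightarrow> (real \<Rightarrow> real) \<Rightarrow> (real \<Rightarrow> real) \<Rightarrow> (real \<Rightarrow> real) \<Rightarrow>
    ((nat \<Rightarrow> real) \<Rightarrow> real) \<Rightarrow> real \<Rightarrow> (nat \<Rightarrow> real) \<Rightarrow> bool" where
  "equilibrium n l g h P \<sigma> r \<longleftrightarrow> pos_pt n r \<and> (\<forall>k<n. msrs_f l g h P \<sigma> k r = 0)"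

definition jacobian :: "nat \<Rightarrow> (nat \<Rightarrow> (nat \<Rightarrow> real) \<Rightarrow> real) \<Rightarrow> (nat \<Rightarrow> real) \<Rightarrow> real mat" where
  "jacobian n f r = mat n n (\<lambda>(i, j). partial (f i) j r)"

(* locally asymptotically stable: all (complex) eigenvalues of the Jacobian have negative real part *)
definition stable_eq :: "nat \<Rightarrow> (real \<Rightarrow> real) \<Rightarrow> (real \<Rightarrow> real) \<Rightarrow> (real \<Rightarrow> real) \<Rightarrow>
    ((nat \<Rightarrow> real) \<Rightarrow> real) \<Rightarrow> real \<Rightarrow> (nat \<Rightarrow> real) \<Rightarrow> bool" where
  "stable_eq n l g h P \<sigma> r \<longleftrightarrow>
     (\<forall>ev::complex. eigenvalue (map_mat complex_of_real (jacobian n (msrs_f l g h P \<sigma>) r)) ev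
        \<longrightarrow> Re ev < 0)"

definition Dk :: "(real \<Rightarrow> real) \<Rightarrow> (real \<Rightarrow> real) \<Rightarrow> ((nat \<Rightarrow> real) \<Rightarrow> real) \<Rightarrow> nat \<Rightarrow> (nat \<Rightarrow> real) \<Rightarrow> real" where
  "Dk l h P k x = - (P x + h (x k)) / l (x k)"

end

theory Submission
  imports Defs
begin

text \<open>
  Permuting coordinates, an equilibrium whose coordinates take the value p exactly i times and
  q exactly n - i times becomes \<rho> = (p, \<dots>, p, q, \<dots>, q). By the symmetry of P, and because at an
  equilibrium the off-diagonal entry (k, j) of the Jacobian is \<partial>P/\<partial>x_j / D_k, the Jacobian
  there is a two-block matrix: constant on the diagonal and constant off the diagonal within each
  block. Such a matrix has the eigenvalue \<beta> - \<gamma> on vectors supported in the first block with zero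
  sum (only when i \<ge> 2), \<tau> - \<xi> likewise on the second block, and its remaining eigenvalues are the
  roots of the characteristic polynomial of the 2x2 matrix by which it acts on the two block sums.
  For these roots the Routh-Hurwitz conditions read G3 < 0 and G4 > 0. The diagonal case is
  i = 1 with p = q.
\<close>

section \<open>Spectra of two-block matrices\<close>

lemma quadratic_roots_Re_neg_iff:
  fixes T D :: real
  shows "(\<forall>z::complex. z\<^sup>2 - of_real T * z + of_real D = 0 \<longrightarrow> Re z < 0) \<longleftrightarrow> T < 0 \<and> D > 0"
proof
  assume H: "\<forall>z::complex. z\<^sup>2 - of_real T * z + of_real D = 0 \<longrightarrow> Re z < 0"
  define d where "d = T\<^sup>2 - 4 * D"
  show "T < 0 \<and> D > 0"
  proof (cases "d \<ge> 0")
    case True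
    define w where "w = (T + sqrt d) / 2"
    have sq: "(sqrt d)\<^sup>2 = d" using True by simp
    have "w\<^sup>2 - T * w + D = 0"
      unfolding w_def using sq by (simp add: d_def power2_eq_square field_simps)
    then have "(complex_of_real w)\<^sup>2 - of_real T * of_real w + of_real D = 0"
      by (metis of_real_0 of_real_add of_real_diff of_real_mult of_real_power)
    with H have "T + sqrt d < 0" unfolding w_def by fastforce
    then have "T < 0" "sqrt d < - T" using True real_sqrt_ge_zero[of d] by linarith+
    then have "(sqrt d)\<^sup>2 < (- T)\<^sup>2" using True by (intro power_strict_mono) auto
    then show ?thesis using \<open>T < 0\<close> sq unfolding d_def by simp
  next
    case False
    define z where "z = Complex (T / 2) (sqrt (- d) / 2)"
    have sq: "(sqrt (- d))\<^sup>2 = - d" using False by simp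
    have "z\<^sup>2 - of_real T * z + of_real D = 0"
      unfolding z_def using sq by (simp add: complex_eq_iff power2_eq_square d_def field_simps)
    with H have "T < 0" unfolding z_def by fastforce
    moreover have "D > 0" using False zero_le_power2[of T] unfolding d_def by linarith
    ultimately show ?thesis ..
  qed
next
  assume TD: "T < 0 \<and> D > 0"
  show "\<forall>z::complex. z\<^sup>2 - of_real T * z + of_real D = 0 \<longrightarrow> Re z < 0"
  proof (intro allI impI)
    fix z :: complex
    assume root: "z\<^sup>2 - of_real T * z + of_real D = 0"
    obtain a b where z: "z = Complex a b" by (cases z)
    have re: "a * a - b * b - T * a + D = 0"
      using arg_cong[OF root, of Re] by (simp add: z power2_eq_square)
    have im: "(2 * a - T) * b = 0"
      using arg_cong[OF root, of Im] by (simp add: z power2_eq_square algebra_simps)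
    show "Re z < 0"
    proof (cases "b = 0")
      case True
      have "a \<ge> 0 \<Longrightarrow> T * a \<le> 0" using TD by (simp add: mult_nonpos_nonneg)
      then show ?thesis using re TD True by (simp add: z) (smt (verit) zero_le_square)
    next
      case False
      then show ?thesis using im TD by (simp add: z)
    qed
  qed
qed

lemma eigenvalue_iff_ex_fun:
  fixes A :: "'a::comm_ring_1 mat"
  assumes A: "A \<in> carrier_mat n n"
  shows "eigenvalue A z \<longleftrightarrow>
    (\<exists>w. (\<exists>k<n. w k \<noteq> 0) \<and> (\<forall>k<n. (\<Sum>j<n. A $$ (k, j) * w j) = z * w k))"
proof
  assume "eigenvalue A z"
  then obtain v where v: "v \<in> carrier_vec n" "v \<noteq> 0\<^sub>v n" "A *\<^sub>v v = z \<cdot>\<^sub>v v"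
    unfolding eigenvalue_def eigenvector_def using A by auto
  have "\<exists>k<n. vec_index v k \<noteq> 0"
    using v(1,2) by (metis eq_vecI carrier_vecD index_zero_vec)
  moreover have "(\<Sum>j<n. A $$ (k, j) * vec_index v j) = z * vec_index v k" if "k < n" for k
    using arg_cong[OF v(3), of "\<lambda>u. vec_index u k"] that A v(1)
    by (simp add: scalar_prod_def lessThan_atLeast0)
  ultimately show "\<exists>w. (\<exists>k<n. w k \<noteq> 0) \<and> (\<forall>k<n. (\<Sum>j<n. A $$ (k, j) * w j) = z * w k)"
    by (intro exI[of _ "\<lambda>j. vec_index v j"]) auto
next
  assume "\<exists>w. (\<exists>k<n. w k \<noteq> 0) \<and> (\<forall>k<n. (\<Sum>j<n. A $$ (k, j) * w j) = z * w k)"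
  then obtain w where w: "\<exists>k<n. w k \<noteq> 0" "\<forall>k<n. (\<Sum>j<n. A $$ (k, j) * w j) = z * w k"
    by blast
  have "vec n w \<noteq> 0\<^sub>v n" using w(1) by (auto simp: vec_eq_iff)
  moreover have "A *\<^sub>v vec n w = z \<cdot>\<^sub>v vec n w"
    using A w(2) by (intro eq_vecI) (auto simp: scalar_prod_def lessThan_atLeast0)
  ultimately show "eigenvalue A z"
    unfolding eigenvalue_def eigenvector_def using A by (intro exI[of _ "vec n w"]) auto
qed

definition two_block_mat ::
    "nat \<Rightarrow> nat set \<Rightarrow> 'a \<Rightarrow> 'a \<Rightarrow> 'a \<Rightarrow> 'a \<Rightarrow> 'a \<Rightarrow> 'a \<Rightarrow> 'a::zero mat" where
  "two_block_mat n C b t g x m v = mat n n (\<lambda>(k, j).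
     if j = k then (if k \<in> C then b else t)
     else if j \<in> C then (if k \<in> C then g else v)
     else (if k \<in> C then m else x))"

lemma two_block_mat_carrier: "two_block_mat n C b t g x m v \<in> carrier_mat n n"
  unfolding two_block_mat_def by simp

text \<open>
  The eigenvector equation of two_block_mat in terms of the block sums of w, for
  arbitrary disjoint index sets C and D.
\<close>

definition block_eigenvector ::
    "nat set \<Rightarrow> nat set \<Rightarrow> 'a::field \<Rightarrow> 'a \<Rightarrow> 'a \<Rightarrow> 'a \<Rightarrow> 'a \<Rightarrow> 'a \<Rightarrow> 'a \<Rightarrow> (nat \<Rightarrow> 'a) \<Rightarrow> bool" where
  "block_eigenvector C D b t g x m v z w \<longleftrightarrow>
     (\<exists>k\<in>C \<union> D. w k \<noteq> 0) \<and>
     (\<forall>k\<in>C. (b - g) * w k + g * sum w C + m * sum w D = z * w k) \<and>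
     (\<forall>k\<in>D. (t - x) * w k + v * sum w C + x * sum w D = z * w k)"

text \<open>The characteristic polynomial of the action on the block sums, with i = |C| and j = |D|.\<close>

definition block_char :: "nat \<Rightarrow> nat \<Rightarrow> 'a::field \<Rightarrow> 'a \<Rightarrow> 'a \<Rightarrow> 'a \<Rightarrow> 'a \<Rightarrow> 'a \<Rightarrow> 'a \<Rightarrow> 'a" where
  "block_char i j b t g x m v z =
     (b + (of_nat i - 1) * g - z) * (t + (of_nat j - 1) * x - z) - of_nat i * of_nat j * m * v"

lemma block_eigenvector_swap:
  "block_eigenvector C D b t g x m v z w \<longleftrightarrow> block_eigenvector D C t b x g v m z w"
  unfolding block_eigenvector_def by (auto simp: ac_simps)

lemma block_eigenvector_sum:
  assumes "finite C" and "block_eigenvector C D b t g x m v z w"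
  shows "(b + (of_nat (card C) - 1) * g - z) * sum w C + of_nat (card C) * m * sum w D = 0"
proof -
  have "z * sum w C = (\<Sum>k\<in>C. (b - g) * w k + (g * sum w C + m * sum w D))"
    using assms(2) unfolding block_eigenvector_def sum_distrib_left
    by (intro sum.cong) (auto simp: add.assoc)
  also have "\<dots> = (b - g) * sum w C + of_nat (card C) * (g * sum w C + m * sum w D)"
    by (simp add: sum.distrib sum_distrib_left)
  finally show ?thesis by (simp add: algebra_simps)
qed

lemma block_eigenvector_zero_sums:
  assumes "finite C" and "block_eigenvector C D b t g x m v z w"
    and "sum w C = 0" "sum w D = 0" and "k \<in> C" "w k \<noteq> 0"
  shows "2 \<le> card C \<and> z = b - g"
proof
  have "(b - g) * w k = z * w k"
    using assms(2-5) unfolding block_eigenvector_def by auto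
  then show "z = b - g" using \<open>w k \<noteq> 0\<close> by simp
  show "2 \<le> card C"
  proof (rule ccontr)
    assume "\<not> 2 \<le> card C"
    moreover have "card C \<noteq> 0" using assms(1,5) by auto
    ultimately have "card C = 1" by linarith
    then obtain a where "C = {a}" by (rule card_1_singletonE)
    then show False using assms(3,5,6) by simp
  qed
qed

lemma block_eigenvector_cases:
  assumes "finite C" "finite D" and ev: "block_eigenvector C D b t g x m v z w"
  shows "(2 \<le> card C \<and> z = b - g) \<or> (2 \<le> card D \<and> z = t - x) \<or>
         block_char (card C) (card D) b t g x m v z = 0"
proof (cases "sum w C = 0 \<and> sum w D = 0")
  case True
  obtain k where "k \<in> C \<or> k \<in> D" "w k \<noteq> 0" using ev unfolding block_eigenvector_def by blast
  moreover have "block_eigenvector D C t b x g v m z w" using ev by (simp only: block_eigenvector_swap)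
  ultimately show ?thesis
    using True block_eigenvector_zero_sums[OF assms(1) ev] block_eigenvector_zero_sums[OF assms(2)]
    by metis
next
  case False
  define a where "a = b + (of_nat (card C) - 1) * g - z"
  define d where "d = t + (of_nat (card D) - 1) * x - z"
  define c1 where "c1 = of_nat (card C) * m"
  define c2 where "c2 = of_nat (card D) * v"
  have e1: "a * sum w C + c1 * sum w D = 0"
    using block_eigenvector_sum[OF assms(1) ev] unfolding a_def c1_def .
  have "block_eigenvector D C t b x g v m z w" using ev by (simp only: block_eigenvector_swap)
  then have e2: "c2 * sum w C + d * sum w D = 0"
    using block_eigenvector_sum[OF assms(2)] unfolding d_def c2_def by (simp add: ac_simps)
  \<comment> \<open>the block sums are a nonzero solution of the 2x2 system e1, e2\<close>
  have "(a * d - c1 * c2) * sum w C = d * (a * sum w C + c1 * sum w D) - c1 * (c2 * sum w C + d * sum w D)"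
    by (simp add: algebra_simps)
  then have 1: "(a * d - c1 * c2) * sum w C = 0" by (simp only: e1 e2) simp
  have "(a * d - c1 * c2) * sum w D = a * (c2 * sum w C + d * sum w D) - c2 * (a * sum w C + c1 * sum w D)"
    by (simp add: algebra_simps)
  then have 2: "(a * d - c1 * c2) * sum w D = 0" by (simp only: e1 e2) simp
  have "a * d - c1 * c2 = 0" using 1 2 False by auto
  then show ?thesis unfolding block_char_def a_def d_def c1_def c2_def by (simp add: ac_simps)
qed

lemma ex_block_eigenvector_diag_diff:
  fixes b t g x m v :: "'a::field"
  assumes "finite C" and "C \<inter> D = {}" and "2 \<le> card C"
  shows "\<exists>w. block_eigenvector C D b t g x m v (b - g) w"
proof -
  have "\<not> card C \<le> Suc 0" using assms(3) by simp
  then obtain a1 a2 where a: "a1 \<in> C" "a2 \<in> C" "a1 \<noteq> a2"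
    using card_le_Suc0_iff_eq[OF assms(1)] by blast
  define w :: "nat \<Rightarrow> 'a" where "w k = (if k = a1 then 1 else 0) - (if k = a2 then 1 else 0)" for k
  have "sum w D = 0"
    using a assms(2) unfolding w_def by (intro sum.neutral) auto
  moreover have "sum w C = 0"
    using a assms(1) unfolding w_def by (simp add: sum_subtractf)
  ultimately have "block_eigenvector C D b t g x m v (b - g) w"
    using a assms(2) unfolding block_eigenvector_def by (auto simp: w_def)
  then show ?thesis by blast
qed

lemma block_eigenvector_of_char_root:
  fixes b t g x m v z :: "'a::field_char_0"
  assumes "finite C" "finite D" "C \<inter> D = {}" "C \<noteq> {}" "D \<noteq> {}"
    and "block_char (card C) (card D) b t g x m v z = 0"
  shows "\<exists>w. block_eigenvector C D b t g x m v z w"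
proof -
  define i :: 'a where "i = of_nat (card C)"
  define j :: 'a where "j = of_nat (card D)"
  define a where "a = b + (i - 1) * g - z"
  define d where "d = t + (j - 1) * x - z"
  have ij: "i \<noteq> 0" "j \<noteq> 0" using assms(1,2,4,5) unfolding i_def j_def by auto
  have det: "a * d - (i * m) * (j * v) = 0"
    using assms(6) unfolding block_char_def a_def d_def i_def j_def by (simp add: ac_simps)
  obtain s u where su: "s \<noteq> 0 \<or> u \<noteq> 0" "a * s + (i * m) * u = 0" "(j * v) * s + d * u = 0"
  proof (cases "a \<noteq> 0 \<or> i * m \<noteq> 0")
    case True
    then show ?thesis using det by (intro that[of "i * m" "- a"]) (auto simp: algebra_simps)
  next
    case False
    then show ?thesis
      using det by (cases "j * v \<noteq> 0 \<or> d \<noteq> 0") (auto intro: that[of d "- (j * v)"] that[of 1 0])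
  qed
  define w where "w k = (if k \<in> C then s / i else u / j)" for k
  have "sum w C = (\<Sum>k\<in>C. s / i)" "sum w D = (\<Sum>k\<in>D. u / j)"
    using assms(3) by (rule_tac[!] sum.cong) (auto simp: w_def)
  then have sums: "sum w C = s" "sum w D = u"
    using ij unfolding i_def j_def by simp_all
  have "\<exists>k\<in>C \<union> D. w k \<noteq> 0"
  proof (cases "s = 0")
    case True
    obtain k where "k \<in> D" using assms(5) by blast
    then show ?thesis using True su(1) ij assms(3) by (intro bexI[of _ k]) (auto simp: w_def)
  next
    case False
    obtain k where "k \<in> C" using assms(4) by blast
    then show ?thesis using False ij by (intro bexI[of _ k]) (auto simp: w_def)
  qed
  moreover have "(b - g) * w k + g * sum w C + m * sum w D = z * w k" if "k \<in> C" for k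
  proof -
    have "(b - g) * w k + g * sum w C + m * sum w D - z * w k = (a * s + (i * m) * u) / i"
      using that ij unfolding sums w_def a_def by (simp add: field_simps)
    then show ?thesis using su(2) by simp
  qed
  moreover have "(t - x) * w k + v * sum w C + x * sum w D = z * w k" if "k \<in> D" for k
  proof -
    have "k \<notin> C" using that assms(3) by blast
    then have "(t - x) * w k + v * sum w C + x * sum w D - z * w k = ((j * v) * s + d * u) / j"
      using ij unfolding sums w_def d_def by (simp add: field_simps)
    then show ?thesis using su(3) by simp
  qed
  ultimately show ?thesis unfolding block_eigenvector_def by blast
qed

lemma ex_block_eigenvector_iff:
  fixes b t g x m v z :: "'a::field_char_0"
  assumes "finite C" "finite D" "C \<inter> D = {}" "C \<noteq> {}" "D \<noteq> {}"
  shows "(\<exists>w. block_eigenvector C D b t g x m v z w) \<longleftrightarrow>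
    (2 \<le> card C \<and> z = b - g) \<or> (2 \<le> card D \<and> z = t - x) \<or>
    block_char (card C) (card D) b t g x m v z = 0"
proof
  assume "\<exists>w. block_eigenvector C D b t g x m v z w"
  then show "(2 \<le> card C \<and> z = b - g) \<or> (2 \<le> card D \<and> z = t - x) \<or>
      block_char (card C) (card D) b t g x m v z = 0"
    using block_eigenvector_cases[OF assms(1,2)] by blast
next
  assume "(2 \<le> card C \<and> z = b - g) \<or> (2 \<le> card D \<and> z = t - x) \<or>
      block_char (card C) (card D) b t g x m v z = 0"
  then consider "2 \<le> card C" "z = b - g" | "2 \<le> card D" "z = t - x"
    | "block_char (card C) (card D) b t g x m v z = 0" by blast
  then show "\<exists>w. block_eigenvector C D b t g x m v z w"
  proof cases
    case 1
    then show ?thesis using ex_block_eigenvector_diag_diff[OF assms(1,3)] by simp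
  next
    case 2
    have "D \<inter> C = {}" using assms(3) by blast
    then show ?thesis
      using 2 ex_block_eigenvector_diag_diff[OF assms(2)] by (simp add: block_eigenvector_swap[of C])
  next
    case 3
    then show ?thesis by (rule block_eigenvector_of_char_root[OF assms])
  qed
qed

lemma two_block_mat_row_sum:
  fixes w :: "nat \<Rightarrow> 'a::comm_ring_1"
  assumes "C \<subseteq> {..<n}" and "k < n"
  shows "(\<Sum>j<n. two_block_mat n C b t g x m v $$ (k, j) * w j) =
    (if k \<in> C then (b - g) * w k + g * sum w C + m * sum w ({..<n} - C)
     else (t - x) * w k + v * sum w C + x * sum w ({..<n} - C))"
proof -
  define B where "B = (if k \<in> C then b else t)"
  define G where "G = (if k \<in> C then g else v)"
  define M where "M = (if k \<in> C then m else x)"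
  let ?f = "\<lambda>j. (if j \<in> C then G else M) * w j"
  have "two_block_mat n C b t g x m v $$ (k, j) * w j =
      ?f j + (if j = k then (B - (if k \<in> C then G else M)) * w k else 0)" if "j < n" for j
    using that assms(2) by (cases "j = k") (simp_all add: two_block_mat_def B_def G_def M_def algebra_simps)
  then have "(\<Sum>j<n. two_block_mat n C b t g x m v $$ (k, j) * w j) =
      (\<Sum>j<n. ?f j + (if j = k then (B - (if k \<in> C then G else M)) * w k else 0))"
    by (intro sum.cong) auto
  also have "\<dots> = (\<Sum>j<n. ?f j) + (B - (if k \<in> C then G else M)) * w k"
    using assms(2) by (simp add: sum.distrib)
  also have "\<dots> = G * sum w C + M * sum w ({..<n} - C) + (B - (if k \<in> C then G else M)) * w k"
    using assms(1) by (simp add: sum.subset_diff[of C] sum_distrib_left)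
  finally show ?thesis by (cases "k \<in> C") (simp_all add: B_def G_def M_def algebra_simps)
qed

lemma eigenvalue_two_block_mat_iff:
  fixes b t g x m v z :: "'a::field_char_0"
  assumes "C \<subseteq> {..<n}" "C \<noteq> {}" "C \<noteq> {..<n}"
  shows "eigenvalue (two_block_mat n C b t g x m v) z \<longleftrightarrow>
    (2 \<le> card C \<and> z = b - g) \<or> (2 \<le> n - card C \<and> z = t - x) \<or>
    block_char (card C) (n - card C) b t g x m v z = 0"
proof -
  define D where "D = {..<n} - C"
  have fin: "finite C" "finite D" using assms(1) finite_subset unfolding D_def by auto
  have cardD: "card D = n - card C" unfolding D_def using assms(1) fin(1) by (simp add: card_Diff_subset)
  have ex: "(\<exists>k<n. w k \<noteq> 0) \<longleftrightarrow> (\<exists>k\<in>C \<union> D. w k \<noteq> 0)" for w :: "nat \<Rightarrow> 'a"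
    using assms(1) unfolding D_def by auto
  have "D \<noteq> {}" using assms unfolding D_def by auto
  have rows: "(\<forall>k<n. (\<Sum>j<n. two_block_mat n C b t g x m v $$ (k, j) * w j) = z * w k) \<longleftrightarrow>
      (\<forall>k\<in>C. (b - g) * w k + g * sum w C + m * sum w D = z * w k) \<and>
      (\<forall>k\<in>D. (t - x) * w k + v * sum w C + x * sum w D = z * w k)" for w
  proof -
    have "(\<forall>k<n. (\<Sum>j<n. two_block_mat n C b t g x m v $$ (k, j) * w j) = z * w k) \<longleftrightarrow>
      (\<forall>k<n. (if k \<in> C then (b - g) * w k + g * sum w C + m * sum w D
               else (t - x) * w k + v * sum w C + x * sum w D) = z * w k)"
      by (simp add: two_block_mat_row_sum[OF assms(1)] D_def)
    then show ?thesis using assms(1) unfolding D_def by auto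
  qed
  have "eigenvalue (two_block_mat n C b t g x m v) z \<longleftrightarrow> (\<exists>w. block_eigenvector C D b t g x m v z w)"
    unfolding eigenvalue_iff_ex_fun[OF two_block_mat_carrier] block_eigenvector_def rows ex ..
  also have "\<dots> \<longleftrightarrow> (2 \<le> card C \<and> z = b - g) \<or> (2 \<le> card D \<and> z = t - x) \<or>
      block_char (card C) (card D) b t g x m v z = 0"
    by (rule ex_block_eigenvector_iff) (use fin assms(2) \<open>D \<noteq> {}\<close> in \<open>auto simp: D_def\<close>)
  finally show ?thesis unfolding cardD .
qed

text \<open>In the notation of the paper: G2 < 0 if i \<ge> 2, G1 < 0 if j \<ge> 2, G3 < 0 and G4 > 0.\<close>

definition two_block_stable_cond :: "nat \<Rightarrow> nat \<Rightarrow> real \<Rightarrow> real \<Rightarrow> real \<Rightarrow> real \<Rightarrow> real \<Rightarrow> real \<Rightarrow> bool" where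
  "two_block_stable_cond i j b t g x m v \<longleftrightarrow>
     (2 \<le> i \<longrightarrow> b - g < 0) \<and> (2 \<le> j \<longrightarrow> t - x < 0) \<and>
     b + t + (real i - 1) * g + (real j - 1) * x < 0 \<and>
     (b + (real i - 1) * g) * (t + (real j - 1) * x) - real i * real j * m * v > 0"

lemma block_char_of_real:
  "block_char i j (of_real b) (of_real t) (of_real g) (of_real x) (of_real m) (of_real v) (z::complex) =
   z\<^sup>2 - of_real (b + t + (real i - 1) * g + (real j - 1) * x) * z +
     of_real ((b + (real i - 1) * g) * (t + (real j - 1) * x) - real i * real j * m * v)"
  unfolding block_char_def by (simp add: power2_eq_square algebra_simps)

lemma two_block_mat_stable_iff:
  assumes "C \<subseteq> {..<n}" "C \<noteq> {}" "C \<noteq> {..<n}"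
  shows "(\<forall>z. eigenvalue (two_block_mat n C (of_real b) (of_real t) (of_real g) (of_real x)
                 (of_real m) (of_real v)) z \<longrightarrow> Re z < 0) \<longleftrightarrow>
    two_block_stable_cond (card C) (n - card C) b t g x m v"
  unfolding eigenvalue_two_block_mat_iff[OF assms] block_char_of_real two_block_stable_cond_def
    quadratic_roots_Re_neg_iff[symmetric]
  by auto

section \<open>Jacobians of multistable regulatory systems\<close>

lemma differentiable_n_has_partial:
  assumes "differentiable_n n F x" and j: "j < n"
  shows "((\<lambda>t. F (x(j := t))) has_real_derivative partial F j x) (at (x j))"
proof -
  obtain c where c: "\<forall>e>0. \<exists>d>0. \<forall>y. (\<forall>k<n. \<bar>y k - x k\<bar> < d) \<and> (\<forall>k. n \<le> k \<longrightarrow> y k = x k) \<longrightarrow>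
      \<bar>F y - F x - (\<Sum>k<n. c k * (y k - x k))\<bar> \<le> e * (\<Sum>k<n. \<bar>y k - x k\<bar>)"
    using assms(1) unfolding differentiable_n_def by blast
  have "((\<lambda>t. F (x(j := t))) has_real_derivative c j) (at (x j))"
    unfolding has_field_derivative_iff
  proof (rule LIM_I)
    fix e :: real
    assume "e > 0"
    then obtain d where "d > 0" and d: "\<forall>y. (\<forall>k<n. \<bar>y k - x k\<bar> < d) \<and> (\<forall>k. n \<le> k \<longrightarrow> y k = x k) \<longrightarrow>
      \<bar>F y - F x - (\<Sum>k<n. c k * (y k - x k))\<bar> \<le> e / 2 * (\<Sum>k<n. \<bar>y k - x k\<bar>)"
      using c[rule_format, of "e / 2"] by auto
    show "\<exists>s>0. \<forall>t. t \<noteq> x j \<and> norm (t - x j) < s \<longrightarrow>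
        norm ((F (x(j := t)) - F (x(j := x j))) / (t - x j) - c j) < e"
    proof (intro exI[of _ d] conjI allI impI \<open>d > 0\<close>)
      fix t
      assume t: "t \<noteq> x j \<and> norm (t - x j) < d"
      have "(\<Sum>k<n. c k * ((x(j := t)) k - x k)) = (\<Sum>k<n. if k = j then c j * (t - x j) else 0)"
        "(\<Sum>k<n. \<bar>(x(j := t)) k - x k\<bar>) = (\<Sum>k<n. if k = j then \<bar>t - x j\<bar> else 0)"
        by (rule_tac[!] sum.cong) auto
      then have "\<bar>F (x(j := t)) - F x - c j * (t - x j)\<bar> \<le> e / 2 * \<bar>t - x j\<bar>"
        using d[rule_format, of "x(j := t)"] t \<open>d > 0\<close> j by auto
      then have "norm ((F (x(j := t)) - F x) / (t - x j) - c j) \<le> e / 2"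
        using t by (simp add: diff_divide_distrib[symmetric] field_simps)
      then show "norm ((F (x(j := t)) - F (x(j := x j))) / (t - x j) - c j) < e"
        using \<open>e > 0\<close> by simp
    qed
  qed
  moreover from this have "partial F j x = c j"
    unfolding partial_def by (simp add: DERIV_imp_deriv)
  ultimately show ?thesis by simp
qed

lemma
  assumes "MSRS n l g h P"
  shows MSRS_differentiable_n: "pos_pt n x \<Longrightarrow> differentiable_n n P x"
    and MSRS_denominator_pos: "pos_pt n x \<Longrightarrow> k < n \<Longrightarrow> P x + h (x k) > 0"
    and MSRS_l_nonzero: "z > 0 \<Longrightarrow> l z \<noteq> 0"
  using assms unfolding MSRS_def by blast+

lemma MSRS_P_cong:
  assumes "MSRS n l g h P" and "\<forall>k<n. x k = y k"
  shows "P x = P y"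
  using assms unfolding MSRS_def by blast

lemma MSRS_P_permute:
  assumes M: "MSRS n l g h P" and "\<pi> permutes {..<n}"
  shows "P (x \<circ> \<pi>) = P x"
  using assms(2) finite_lessThan[of n]
proof (induction \<pi> arbitrary: x rule: permutes_induct)
  case id
  show ?case by simp
next
  case (swap a b \<pi>)
  have "P (x \<circ> (Transposition.transpose a b \<circ> \<pi>)) = P ((x \<circ> Transposition.transpose a b) \<circ> \<pi>)"
    by (simp add: comp_assoc)
  also have "\<dots> = P (x \<circ> Transposition.transpose a b)" by (rule swap.IH)
  also have "\<dots> = P x" using M swap.hyps unfolding MSRS_def by auto
  finally show ?case .
qed

lemma MSRS_P_perm_cong:
  assumes M: "MSRS n l g h P" and \<pi>: "\<pi> permutes {..<n}" and xy: "\<forall>k<n. x k = y (\<pi> k)"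
  shows "P x = P y"
proof -
  have "P x = P (y \<circ> \<pi>)" using xy by (intro MSRS_P_cong[OF M]) simp
  also have "\<dots> = P y" by (rule MSRS_P_permute[OF M \<pi>])
  finally show ?thesis .
qed

lemma MSRS_P_upd_swap:
  assumes M: "MSRS n l g h P" and "a < n" "b < n" and "y a = y b"
  shows "P (y(a := t)) = P (y(b := t))"
proof (rule MSRS_P_perm_cong[OF M])
  show "Transposition.transpose a b permutes {..<n}" using assms(2,3) by (simp add: permutes_swap_id)
  show "\<forall>k<n. (y(a := t)) k = (y(b := t)) (Transposition.transpose a b k)"
    using assms(4) by (auto simp: Transposition.transpose_def)
qed

lemma msrs_f_perm_cong:
  assumes "MSRS n l g h P" "\<pi> permutes {..<n}" "\<forall>k<n. x k = y (\<pi> k)" and "k < n"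
  shows "msrs_f l g h P \<sigma> k x = msrs_f l g h P \<sigma> (\<pi> k) y"
  using MSRS_P_perm_cong[OF assms(1-3)] assms(3,4) by (simp add: msrs_f_def)

lemma partial_msrs_f_perm_cong:
  assumes M: "MSRS n l g h P" and \<pi>: "\<pi> permutes {..<n}" and xy: "\<forall>k<n. x k = y (\<pi> k)"
    and "k < n" "j < n"
  shows "partial (msrs_f l g h P \<sigma> k) j x = partial (msrs_f l g h P \<sigma> (\<pi> k)) (\<pi> j) y"
proof -
  have "\<forall>k<n. (x(j := t)) k = (y(\<pi> j := t)) (\<pi> k)" for t
    using xy permutes_inj[OF \<pi>] by (auto dest: injD)
  then have "(\<lambda>t. msrs_f l g h P \<sigma> k (x(j := t))) = (\<lambda>t. msrs_f l g h P \<sigma> (\<pi> k) (y(\<pi> j := t)))"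
    using msrs_f_perm_cong[OF M \<pi> _ \<open>k < n\<close>] by blast
  then show ?thesis unfolding partial_def using xy \<open>j < n\<close> by simp
qed

lemma partial_P_eq:
  assumes "MSRS n l g h P" "a < n" "b < n" "y a = y b"
  shows "partial P a y = partial P b y"
  using MSRS_P_upd_swap[OF assms] assms(4) unfolding partial_def by simp

lemma partial_msrs_f_diag_eq:
  assumes "MSRS n l g h P" "a < n" "b < n" "y a = y b"
  shows "partial (msrs_f l g h P \<sigma> a) a y = partial (msrs_f l g h P \<sigma> b) b y"
  using MSRS_P_upd_swap[OF assms] assms(4) unfolding partial_def msrs_f_def by simp

lemma partial_msrs_f_off_diag:
  assumes M: "MSRS n l g h P" and x: "pos_pt n x" and "k < n" "j < n" "k \<noteq> j"
    and eq: "msrs_f l g h P \<sigma> k x = 0"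
  shows "partial (msrs_f l g h P \<sigma> k) j x = partial P j x / Dk l h P k x"
proof -
  define e where "e = h (x k)"
  define L where "L = l (x k)"
  define p where "p = partial P j x"
  have pos: "P x + e > 0" using MSRS_denominator_pos[OF M x \<open>k < n\<close>] unfolding e_def .
  have "L \<noteq> 0" using MSRS_l_nonzero[OF M] x \<open>k < n\<close> unfolding pos_pt_def L_def by blast
  have frac: "- (L * Q * p) / Q\<^sup>2 = p / (- Q / L)" if "Q \<noteq> 0" for Q
    using that \<open>L \<noteq> 0\<close> by (simp add: field_simps power2_eq_square)
  have "((\<lambda>t. P (x(j := t))) has_real_derivative p) (at (x j))"
    using differentiable_n_has_partial[OF MSRS_differentiable_n[OF M x] \<open>j < n\<close>] unfolding p_def .
  then have "((\<lambda>t. P (x(j := t)) + e) has_real_derivative p + 0) (at (x j))"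
    by (intro DERIV_add DERIV_const)
  from DERIV_add[OF DERIV_const[of "- L"] DERIV_quotient[OF DERIV_const[of "\<sigma> * g (x k)"] this]] pos
  have "((\<lambda>t. - L + \<sigma> * g (x k) / (P (x(j := t)) + e)) has_real_derivative
      - (\<sigma> * g (x k) * p) / (P x + e)\<^sup>2) (at (x j))"
    by (simp add: power2_eq_square mult.commute)
  moreover have "(\<lambda>t. msrs_f l g h P \<sigma> k (x(j := t))) = (\<lambda>t. - L + \<sigma> * g (x k) / (P (x(j := t)) + e))"
    using \<open>k \<noteq> j\<close> by (simp add: msrs_f_def e_def L_def)
  ultimately have "partial (msrs_f l g h P \<sigma> k) j x = - (\<sigma> * g (x k) * p) / (P x + e)\<^sup>2"
    unfolding partial_def by (simp add: DERIV_imp_deriv)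
  also have "\<sigma> * g (x k) = L * (P x + e)"
  proof -
    have "\<sigma> * g (x k) / (P x + e) = L" using eq unfolding msrs_f_def e_def L_def by simp
    then show ?thesis using pos by (simp add: divide_eq_eq)
  qed
  also have "- (L * (P x + e) * p) / (P x + e)\<^sup>2 = p / (- (P x + e) / L)"
    using pos by (intro frac) simp
  finally show ?thesis unfolding Dk_def e_def L_def p_def .
qed

lemma partial_msrs_f_two_valued:
  assumes M: "MSRS n l g h P" and pos: "pos_pt n \<rho>" and eq: "\<forall>k<n. msrs_f l g h P \<sigma> k \<rho> = 0"
    and \<rho>: "\<forall>k<n. \<rho> k = (if k < i then p else q)" and "i < n" and a: "a < n" and b: "b < n"
  shows "partial (msrs_f l g h P \<sigma> a) b \<rho> =
    (if b = a then
       (if a < i then partial (msrs_f l g h P \<sigma> 0) 0 \<rho> else partial (msrs_f l g h P \<sigma> (n - 1)) (n - 1) \<rho>)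
     else if b < i then
       (if a < i then partial P 1 \<rho> / Dk l h P 0 \<rho> else partial P 0 \<rho> / Dk l h P (n - 1) \<rho>)
     else
       (if a < i then partial P (n - 1) \<rho> / Dk l h P 0 \<rho> else partial P (n - 2) \<rho> / Dk l h P (n - 1) \<rho>))"
proof -
  have Dk: "Dk l h P a \<rho> = Dk l h P c \<rho>" if "\<rho> a = \<rho> c" for c
    using that unfolding Dk_def by simp
  have P: "partial P b \<rho> = partial P c \<rho>" if "c < n" "\<rho> b = \<rho> c" for c
    using partial_P_eq[OF M b that] .
  have n1: "n - 1 < n" "\<not> n - 1 < i" using \<open>i < n\<close> by auto
  show ?thesis
  proof (cases "b = a")
    case True
    then show ?thesis
      using partial_msrs_f_diag_eq[OF M a, of 0 \<rho>] partial_msrs_f_diag_eq[OF M a n1(1), of \<rho>]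
        \<rho> a n1 by auto
  next
    case False
    then have off: "partial (msrs_f l g h P \<sigma> a) b \<rho> = partial P b \<rho> / Dk l h P a \<rho>"
      using partial_msrs_f_off_diag[OF M pos a b] eq a by auto
    consider "a < i" "b < i" | "\<not> a < i" "b < i" | "a < i" "\<not> b < i" | "\<not> a < i" "\<not> b < i"
      by blast
    then show ?thesis
    proof cases
      case 1
      then have "1 < n" "\<rho> b = \<rho> 1" "\<rho> a = \<rho> 0" using False \<rho> a b by auto
      then show ?thesis using 1 False off P[of 1] Dk[of 0] by simp
    next
      case 2
      then have "\<rho> b = \<rho> 0" "\<rho> a = \<rho> (n - 1)" using \<rho> a b n1 by auto
      then show ?thesis using 2 False off P[of 0] Dk[of "n - 1"] \<open>i < n\<close> by simp
    next
      case 3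
      then have "\<rho> b = \<rho> (n - 1)" "\<rho> a = \<rho> 0" using \<rho> a b n1 by auto
      then show ?thesis using 3 False off P[of "n - 1"] Dk[of 0] n1 by simp
    next
      case 4
      then have "n - 2 < n" "\<rho> b = \<rho> (n - 2)" "\<rho> a = \<rho> (n - 1)" using False \<rho> a b n1 by auto
      then show ?thesis using 4 False off P[of "n - 2"] Dk[of "n - 1"] by simp
    qed
  qed
qed

lemma jacobian_two_valued_perm:
  assumes M: "MSRS n l g h P" and eq: "equilibrium n l g h P \<sigma> r"
    and \<pi>: "\<pi> permutes {..<n}" and r: "\<forall>k<n. r k = \<rho> (\<pi> k)"
    and \<rho>: "\<forall>k<n. \<rho> k = (if k < i then p else q)" and "i < n"
  shows "map_mat complex_of_real (jacobian n (msrs_f l g h P \<sigma>) r) =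
    two_block_mat n {k. k < n \<and> \<pi> k < i}
      (of_real (partial (msrs_f l g h P \<sigma> 0) 0 \<rho>))
      (of_real (partial (msrs_f l g h P \<sigma> (n - 1)) (n - 1) \<rho>))
      (of_real (partial P 1 \<rho> / Dk l h P 0 \<rho>))
      (of_real (partial P (n - 2) \<rho> / Dk l h P (n - 1) \<rho>))
      (of_real (partial P (n - 1) \<rho> / Dk l h P 0 \<rho>))
      (of_real (partial P 0 \<rho> / Dk l h P (n - 1) \<rho>))" (is "?J = ?B")
proof -
  have \<pi>n: "\<pi> k < n" if "k < n" for k using permutes_in_image[OF \<pi>] that by simp
  have \<pi>_eq: "\<pi> k = \<pi> j \<longleftrightarrow> k = j" for k j using permutes_inj[OF \<pi>] by (auto dest: injD)
  have preimage: "\<exists>k<n. \<pi> k = a" if "a < n" for a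
    using permutes_image[OF \<pi>] that by (metis image_iff lessThan_iff)
  have pos: "pos_pt n \<rho>"
    unfolding pos_pt_def
  proof (intro allI impI)
    fix a assume "a < n"
    then obtain k where "k < n" "\<pi> k = a" using preimage by blast
    then show "\<rho> a > 0" using eq r unfolding equilibrium_def pos_pt_def by auto
  qed
  have eq\<rho>: "\<forall>a<n. msrs_f l g h P \<sigma> a \<rho> = 0"
  proof (intro allI impI)
    fix a assume "a < n"
    then obtain k where "k < n" "\<pi> k = a" using preimage by blast
    moreover have "msrs_f l g h P \<sigma> k r = 0" using eq \<open>k < n\<close> unfolding equilibrium_def by blast
    ultimately show "msrs_f l g h P \<sigma> a \<rho> = 0"
      using msrs_f_perm_cong[OF M \<pi> r \<open>k < n\<close>] by simp
  qed
  show ?thesis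
  proof (rule eq_matI)
    fix k j assume "k < dim_row ?B" "j < dim_col ?B"
    then have "k < n" "j < n" by (simp_all add: two_block_mat_def)
    then have "?J $$ (k, j) = of_real (partial (msrs_f l g h P \<sigma> (\<pi> k)) (\<pi> j) \<rho>)"
      using partial_msrs_f_perm_cong[OF M \<pi> r] by (simp add: jacobian_def)
    also have "\<dots> = ?B $$ (k, j)"
      using partial_msrs_f_two_valued[OF M pos eq\<rho> \<rho> \<open>i < n\<close> \<pi>n \<pi>n] \<pi>_eq[of j k]
        \<open>k < n\<close> \<open>j < n\<close> by (simp add: two_block_mat_def)
    finally show "?J $$ (k, j) = ?B $$ (k, j)" .
  qed (simp_all add: jacobian_def two_block_mat_def)
qed

lemma stable_eq_two_valued_iff:
  assumes M: "MSRS n l g h P" and eq: "equilibrium n l g h P \<sigma> r"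
    and \<pi>: "\<pi> permutes {..<n}" and r: "\<forall>k<n. r k = \<rho> (\<pi> k)"
    and \<rho>: "\<forall>k<n. \<rho> k = (if k < i then p else q)" and "1 \<le> i" "i < n"
  shows "stable_eq n l g h P \<sigma> r \<longleftrightarrow>
    two_block_stable_cond i (n - i)
      (partial (msrs_f l g h P \<sigma> 0) 0 \<rho>) (partial (msrs_f l g h P \<sigma> (n - 1)) (n - 1) \<rho>)
      (partial P 1 \<rho> / Dk l h P 0 \<rho>) (partial P (n - 2) \<rho> / Dk l h P (n - 1) \<rho>)
      (partial P (n - 1) \<rho> / Dk l h P 0 \<rho>) (partial P 0 \<rho> / Dk l h P (n - 1) \<rho>)"
proof -
  define C where "C = {k. k < n \<and> \<pi> k < i}"
  have "\<pi> ` C = {..<i}"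
  proof
    show "\<pi> ` C \<subseteq> {..<i}" unfolding C_def by auto
    show "{..<i} \<subseteq> \<pi> ` C"
    proof
      fix a assume "a \<in> {..<i}"
      then have "a \<in> \<pi> ` {..<n}" using permutes_image[OF \<pi>] \<open>i < n\<close> by simp
      then show "a \<in> \<pi> ` C" using \<open>a \<in> {..<i}\<close> unfolding C_def by auto
    qed
  qed
  moreover have "inj_on \<pi> C" using permutes_inj[OF \<pi>] by (simp add: inj_on_def inj_def)
  ultimately have card: "card C = i" using card_image by fastforce
  have sub: "C \<subseteq> {..<n}" unfolding C_def by auto
  have ne: "C \<noteq> {}" "C \<noteq> {..<n}" using card assms(6,7) by auto
  show ?thesis
    unfolding stable_eq_def jacobian_two_valued_perm[OF M eq \<pi> r \<rho> \<open>i < n\<close>] C_def[symmetric]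
      two_block_mat_stable_iff[OF sub ne] card ..
qed

lemma two_valued_sorting_permutation:
  assumes "p \<noteq> q" and "card {k. k < n \<and> r k = p} = i" and "card {k. k < n \<and> r k = q} = n - i"
    and "i \<le> n"
  obtains \<pi> where "\<pi> permutes {..<n}" and "\<forall>k<n. r k = (if \<pi> k < i then p else q)"
proof -
  define C where "C = {k. k < n \<and> r k = p}"
  define D where "D = {k. k < n \<and> r k = q}"
  have fin: "finite C" "finite D" and disj: "C \<inter> D = {}"
    using assms(1) unfolding C_def D_def by auto
  have "card (C \<union> D) = n"
    using card_Un_disjoint[OF fin disj] assms(2-4) unfolding C_def D_def by simp
  then have CD: "C \<union> D = {..<n}" by (intro card_subset_eq) (auto simp: C_def D_def)
  have "card C = card {..<i}" "card D = card {i..<n}"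
    using assms(2,3) unfolding C_def D_def by simp_all
  then obtain f1 f2 where f1: "bij_betw f1 C {..<i}" and f2: "bij_betw f2 D {i..<n}"
    using finite_same_card_bij[OF fin(1) finite_lessThan] finite_same_card_bij[OF fin(2) finite_atLeastLessThan]
    by blast
  define \<pi> where "\<pi> k = (if k \<in> C then f1 k else if k \<in> D then f2 k else k)" for k
  have \<pi>C: "bij_betw \<pi> C {..<i}"
    using f1 by (rule bij_betw_cong[THEN iffD1, rotated]) (simp add: \<pi>_def)
  have \<pi>D: "bij_betw \<pi> D {i..<n}"
    using f2 by (rule bij_betw_cong[THEN iffD1, rotated]) (use disj in \<open>auto simp: \<pi>_def\<close>)
  have "bij_betw \<pi> (C \<union> D) ({..<i} \<union> {i..<n})"
    by (rule bij_betw_combine[OF \<pi>C \<pi>D]) auto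
  moreover have "{..<i} \<union> {i..<n} = {..<n}" using assms(4) by auto
  ultimately have "bij_betw \<pi> {..<n} {..<n}" using CD by simp
  then have "\<pi> permutes {..<n}"
    by (rule bij_imp_permutes) (use CD in \<open>auto simp: \<pi>_def\<close>)
  moreover have "r k = (if \<pi> k < i then p else q)" if "k < n" for k
  proof -
    have "k \<in> C \<or> k \<in> D" using CD that by auto
    then show ?thesis
    proof
      assume "k \<in> C"
      moreover from this have "\<pi> k \<in> {..<i}" by (rule bij_betw_apply[OF \<pi>C])
      ultimately show ?thesis unfolding C_def by simp
    next
      assume "k \<in> D"
      moreover from this have "\<pi> k \<in> {i..<n}" by (rule bij_betw_apply[OF \<pi>D])
      ultimately show ?thesis unfolding D_def by simp
    qed
  qed
  ultimately show ?thesis using that by blast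
qed

lemma two_block_stable_cond_diagonal:
  "two_block_stable_cond 1 j t t g x x x \<longleftrightarrow> t - x < 0 \<and> t + real j * x < 0"
proof -
  have "two_block_stable_cond 1 j t t g x x x \<longleftrightarrow>
      (2 \<le> j \<longrightarrow> t - x < 0) \<and> (t - x) + (t + real j * x) < 0 \<and> (t - x) * (t + real j * x) > 0"
    unfolding two_block_stable_cond_def by (simp add: algebra_simps)
  moreover have "u + w < 0 \<and> u * w > 0 \<longleftrightarrow> u < 0 \<and> w < 0" for u w :: real
    unfolding zero_less_mult_iff by linarith
  ultimately show ?thesis by blast
qed

lemma stable_eq_diagonal_iff:
  assumes "n \<ge> 2" and M: "MSRS n l g h P" and eq: "equilibrium n l g h P \<sigma> r"
    and r: "\<forall>k<n. r k = q"
  shows "stable_eq n l g h P \<sigma> r \<longleftrightarrow>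
    partial (msrs_f l g h P \<sigma> (n - 1)) (n - 1) r - partial P (n - 2) r / Dk l h P (n - 1) r < 0 \<and>
    partial (msrs_f l g h P \<sigma> (n - 1)) (n - 1) r + (real n - 1) * (partial P (n - 2) r / Dk l h P (n - 1) r) < 0"
proof -
  have ratio: "partial P k r / Dk l h P m r = partial P (n - 2) r / Dk l h P (n - 1) r"
    if "k < n" "m < n" for k m
    using partial_P_eq[OF M that(1), of "n - 2" r] r that assms(1) unfolding Dk_def by simp
  have \<mu>: "partial P (n - 1) r / Dk l h P 0 r = partial P (n - 2) r / Dk l h P (n - 1) r"
    and \<nu>: "partial P 0 r / Dk l h P (n - 1) r = partial P (n - 2) r / Dk l h P (n - 1) r"
    using assms(1) by (rule_tac[!] ratio) auto
  have \<beta>: "partial (msrs_f l g h P \<sigma> 0) 0 r = partial (msrs_f l g h P \<sigma> (n - 1)) (n - 1) r"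
    using partial_msrs_f_diag_eq[OF M, of 0 "n - 1" r] r assms(1) by simp
  have "stable_eq n l g h P \<sigma> r \<longleftrightarrow>
    two_block_stable_cond 1 (n - 1)
      (partial (msrs_f l g h P \<sigma> 0) 0 r) (partial (msrs_f l g h P \<sigma> (n - 1)) (n - 1) r)
      (partial P 1 r / Dk l h P 0 r) (partial P (n - 2) r / Dk l h P (n - 1) r)
      (partial P (n - 1) r / Dk l h P 0 r) (partial P 0 r / Dk l h P (n - 1) r)"
    by (rule stable_eq_two_valued_iff[OF M eq permutes_id, where p = q and q = q])
      (use r assms(1) in auto)
  then show ?thesis
    unfolding \<beta> \<mu> \<nu> two_block_stable_cond_diagonal using assms(1) by (simp add: of_nat_diff)
qed

theorem corollary1:
  fixes l g h :: "real \<Rightarrow> real" and P :: "(nat \<Rightarrow> real) \<Rightarrow> real"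
    and n :: nat and \<sigma> :: real and r :: "nat \<Rightarrow> real"
  assumes "n \<ge> 2" and "MSRS n l g h P" and "\<sigma> > 0"
    and "equilibrium n l g h P \<sigma> r"
  shows
   "(\<forall>q. (\<forall>k<n. r k = q) \<longrightarrow>
      (let \<tau> = partial (msrs_f l g h P \<sigma> (n - 1)) (n - 1) r;
           \<xi> = partial P (n - 2) r / Dk l h P (n - 1) r;
           G1 = \<tau> - \<xi>; G2 = \<tau> + (real n - 1) * \<xi>
       in stable_eq n l g h P \<sigma> r \<longleftrightarrow> G1 < 0 \<and> G2 < 0))
    \<and>
    (\<forall>p q i. p \<noteq> q \<and> 1 \<le> i \<and> i \<le> n div 2 \<and>
        card {k. k < n \<and> r k = p} = i \<and> card {k. k < n \<and> r k = q} = n - i \<longrightarrow>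
      (let \<rho> = (\<lambda>k. if k < i then p else q);
           \<beta> = partial (msrs_f l g h P \<sigma> 0) 0 \<rho>;
           \<tau> = partial (msrs_f l g h P \<sigma> (n - 1)) (n - 1) \<rho>;
           \<gamma> = partial P 1 \<rho> / Dk l h P 0 \<rho>;
           \<xi> = partial P (n - 2) \<rho> / Dk l h P (n - 1) \<rho>;
           \<mu> = partial P (n - 1) \<rho> / Dk l h P 0 \<rho>;
           \<nu> = partial P 0 \<rho> / Dk l h P (n - 1) \<rho>;
           G1 = \<tau> - \<xi>;
           G2 = \<beta> - \<gamma>;
           G3 = \<beta> + \<tau> + (real i - 1) * \<gamma> + (real n - real i - 1) * \<xi>;
           G4 = (\<beta> + (real i - 1) * \<gamma>) * (\<tau> + (real n - real i - 1) * \<xi>)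
                - real i * (real n - real i) * \<mu> * \<nu>
       in (i = 1 \<and> n = 2 \<longrightarrow> (stable_eq n l g h P \<sigma> r \<longleftrightarrow> G3 < 0 \<and> G4 > 0)) \<and>
          (i = 1 \<and> n > 2 \<longrightarrow> (stable_eq n l g h P \<sigma> r \<longleftrightarrow> G1 < 0 \<and> G3 < 0 \<and> G4 > 0)) \<and>
          (2 \<le> i \<longrightarrow> (stable_eq n l g h P \<sigma> r \<longleftrightarrow> G1 < 0 \<and> G2 < 0 \<and> G3 < 0 \<and> G4 > 0))))"
proof -
  show ?thesis (is "?diag \<and> (\<forall>p q i. ?H p q i \<longrightarrow> ?two p q i)")
  proof
    show ?diag
      unfolding Let_def using stable_eq_diagonal_iff[OF assms(1,2,4)] by blast
    show "\<forall>p q i. ?H p q i \<longrightarrow> ?two p q i"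
    proof (intro allI impI)
      fix p q i
      assume "?H p q i"
      then have H: "p \<noteq> q" "1 \<le> i" "i \<le> n div 2"
        "card {k. k < n \<and> r k = p} = i" "card {k. k < n \<and> r k = q} = n - i" by simp_all
      then have "i < n" "2 \<le> i \<Longrightarrow> 2 \<le> n - i" using assms(1) by linarith+
      obtain \<pi> where \<pi>: "\<pi> permutes {..<n}" and r: "\<forall>k<n. r k = (if \<pi> k < i then p else q)"
        using two_valued_sorting_permutation[OF H(1,4,5)] \<open>i < n\<close> by auto
      have "\<forall>k<n. r k = (\<lambda>k. if k < i then p else q) (\<pi> k)"
        "\<forall>k<n. (\<lambda>k. if k < i then p else q) k = (if k < i then p else q)"
        using r by simp_all
      from stable_eq_two_valued_iff[OF assms(2,4) \<pi> this H(2) \<open>i < n\<close>]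
      show "?two p q i"
        unfolding Let_def two_block_stable_cond_def using \<open>i < n\<close> \<open>2 \<le> i \<Longrightarrow> 2 \<le> n - i\<close>
        by (auto simp: of_nat_diff)
    qed
  qed
qed

end
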